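(* Let $\mathcal{P}$ be a BMS channel and let $(C_i)_{i\ge1}$ be a sequence of binary codes with rates $(R_i)_{i\ge1}$ such that $\limsup_{i\to\infty}R_i<C(\mathcal{P})$ and such that a uniformly random codeword of $C_i$ has each coordinate marginally distributed as Bernoulli$(1/2)$. Let $P_e(C_i,\mathcal{P},j)$ be the probability that the maximum-likelihood decoder decodes coordinate $j$ of a uniformly random codeword of $C_i$ incorrectly given the channel outputs at all other coordinates, and assume $P_e(C_i,\mathcal{P},j)$ does not depend on $j$; denote it $P_e(C_i,\mathcal{P})$. Then there exists $c>0$ such that $P_e(C_i,\mathcal{P})<1/2-c$ for all sufficiently large $i$.
   Context: A binary code $C\subseteq\{0,1\}^n$ has rate $\log_2|C|/n$. A BMS channel is a conditional distribution $\mathcal{P}(y\mid x)$, $x\in\{0,1\}$, $y$ in a (finite or countable) output alphabet $\mathcal{Y}$, together with an involution $\sigma$ of $\mathcal{Y}$ with $\mathcal{P}(y\mid1)=\mathcal{P}(\sigma(y)\mid0)$; it acts independently on each coordinate. Its capacity is $C(\mathcal{P})=\frac12\sum_{x\in\{0,1\},y\in\mathcal{Y}}\mathcal{P}(y\mid x)\log_2\frac{\mathcal{P}(y\mid x)}{\mathcal{P}(y\mid0)/2+\mathcal{P}(y\mid1)/2}$. *)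

theory Defs
  imports "HOL-Analysis.Analysis" "HOL-Library.Extended_Real"
begin

text \<open>Binary input symbols are booleans (False = 0, True = 1).
  A BMS channel: transition probabilities W x y on a countable output type,
  with an involution sigma such that W 1 y = W 0 (sigma y).\<close>

definition bms_channel :: "(bool \<Rightarrow> 'y::countable \<Rightarrow> real) \<Rightarrow> bool" where
  "bms_channel W \<longleftrightarrow>
     (\<forall>x y. 0 \<le> W x y) \<and> (\<forall>x. (W x has_sum 1) UNIV) \<and>
     (\<exists>\<sigma>::'y \<Rightarrow> 'y. (\<forall>y. \<sigma> (\<sigma> y) = y) \<and> (\<forall>y. W True y = W False (\<sigma> y)))"

definition capacity :: "(bool \<Rightarrow> 'y::countable \<Rightarrow> real) \<Rightarrow> real" where
  "capacity W = (1/2) * (\<Sum>\<^sub>\<infinity>y. (\<Sum>x\<in>UNIV.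
      W x y * log 2 (W x y / (W False y / 2 + W True y / 2))))"

definition binary_code :: "nat \<Rightarrow> (nat \<Rightarrow> bool) set \<Rightarrow> bool" where
  "binary_code n C \<longleftrightarrow> C \<noteq> {} \<and> C \<subseteq> {x. \<forall>k\<ge>n. x k = False}"

definition code_rate :: "nat \<Rightarrow> (nat \<Rightarrow> bool) set \<Rightarrow> real" where
  "code_rate n C = log 2 (real (card C)) / real n"

definition ext_outputs :: "nat \<Rightarrow> nat \<Rightarrow> (nat \<Rightarrow> 'y) set" where
  "ext_outputs n j = {y. \<forall>k. (k \<ge> n \<or> k = j) \<longrightarrow> y k = undefined}"

definition joint_ext :: "nat \<Rightarrow> (nat \<Rightarrow> bool) set \<Rightarrow> (bool \<Rightarrow> 'y \<Rightarrow> real)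
    \<Rightarrow> nat \<Rightarrow> bool \<Rightarrow> (nat \<Rightarrow> 'y) \<Rightarrow> real" where
  "joint_ext n C W j b y =
     (\<Sum>x\<in>{x\<in>C. x j = b}. (\<Prod>k\<in>{..<n} - {j}. W (x k) (y k))) / real (card C)"

text \<open>Since the ML decision picks b maximizing the
  likelihood (equivalently, with uniform marginals, the joint probability), the
  error probability is the sum over outputs of the smaller joint probability
  (independent of tie-breaking).\<close>

definition Pe :: "nat \<Rightarrow> (nat \<Rightarrow> bool) set \<Rightarrow> (bool \<Rightarrow> 'y::countable \<Rightarrow> real)
    \<Rightarrow> nat \<Rightarrow> real" where
  "Pe n C W j = (\<Sum>\<^sub>\<infinity>y\<in>ext_outputs n j.
      min (joint_ext n C W j False y) (joint_ext n C W j True y))"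

end

theory Submission
  imports Defs
begin

text \<open>
  Merging all outputs outside a large finite set F into a single symbol degrades the channel, so
  the bit error probabilities can only grow, while the capacity of the merged channel tends to
  C(P) as F grows. It therefore suffices to treat a finite output alphabet.

  There, let X be a uniformly random codeword and Y the channel output. Han's inequality gives
  sum_k H(Y_k | Y_-k) <= H(Y) <= H(X, Y) = log |C| + n H(Y | X). Given Y_-k, the output Y_k is
  the mixture of the two channel laws weighted by the posterior of X_k, and concavity of entropy
  bounds H(Y_k | Y_-k) from below by H(Y_k) - K (1 - 2 P_e) for a constant K of the channel;
  since X_k is uniform, H(Y_k) - H(Y | X) is the capacity. Hence
  log |C| >= n (C(P) - K (1 - 2 P_e)), and a bit error probability near 1/2 would push the rate
  up to nearly capacity.
\<close>

section \<open>Entropy of finite distributions\<close>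

definition fibre_mass :: "'a set \<Rightarrow> ('a \<Rightarrow> real) \<Rightarrow> ('a \<Rightarrow> 'b) \<Rightarrow> 'b \<Rightarrow> real" where
  "fibre_mass A p f t = sum p {a\<in>A. f a = t}"

definition fin_entropy :: "'a set \<Rightarrow> ('a \<Rightarrow> real) \<Rightarrow> ('a \<Rightarrow> 'b) \<Rightarrow> real" where
  "fin_entropy A p f = - (\<Sum>a\<in>A. p a * log 2 (fibre_mass A p f (f a)))"

lemma mult_log_div_ge:
  fixes a b :: real
  assumes "a > 0" "b > 0"
  shows "(a - b) / ln 2 \<le> a * log 2 (a / b)"
proof -
  have "1 - b / a \<le> ln (a / b)"
    using ln_le_minus_one[of "b / a"] assms by (simp add: ln_div)
  hence "(1 - b / a) / ln 2 \<le> log 2 (a / b)"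
    by (simp add: log_def divide_right_mono)
  hence "a * ((1 - b / a) / ln 2) \<le> a * log 2 (a / b)"
    using assms by (intro mult_left_mono) auto
  also have "a * ((1 - b / a) / ln 2) = (a - b) / ln 2"
    using assms by (simp add: field_simps)
  finally show ?thesis .
qed

lemma mult_log_diff_ge:
  fixes a c :: real
  assumes "a \<ge> 0" "c > 0"
  shows "(a - c) / ln 2 \<le> a * log 2 a - a * log 2 c"
proof (cases "a = 0")
  case False
  hence "a * log 2 a - a * log 2 c = a * log 2 (a / c)"
    using assms by (simp add: log_divide right_diff_distrib)
  thus ?thesis
    using mult_log_div_ge[of a c] False assms by simp
qed (use assms in simp)

lemma gibbs_inequality:
  assumes "finite A" and p: "\<And>a. a \<in> A \<Longrightarrow> p a > 0" and q: "\<And>a. a \<in> A \<Longrightarrow> q a > 0"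
    and "sum p A = 1" "sum q A \<le> 1"
  shows "0 \<le> (\<Sum>a\<in>A. p a * log 2 (p a / q a))"
proof -
  have "0 \<le> (1 - sum q A) / ln 2"
    using assms(5) by simp
  also have "\<dots> = (\<Sum>a\<in>A. (p a - q a) / ln 2)"
    using assms(4) by (simp add: sum_divide_distrib[symmetric] sum_subtractf)
  also have "\<dots> \<le> (\<Sum>a\<in>A. p a * log 2 (p a / q a))"
    using p q by (intro sum_mono mult_log_div_ge)
  finally show ?thesis .
qed

lemma fibre_mass_nonneg:
  "(\<And>a. a \<in> A \<Longrightarrow> p a > 0) \<Longrightarrow> 0 \<le> fibre_mass A p f t"
  unfolding fibre_mass_def by (intro sum_nonneg) (auto intro: less_imp_le)

lemma fibre_mass_ge:
  assumes "finite A" "\<And>a. a \<in> A \<Longrightarrow> p a > 0" "a \<in> A"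
  shows "p a \<le> fibre_mass A p f (f a)"
proof -
  have "sum p {a} \<le> sum p {a'\<in>A. f a' = f a}"
    using assms by (intro sum_mono2) (auto intro: less_imp_le)
  thus ?thesis
    unfolding fibre_mass_def by simp
qed

lemma fibre_mass_pos:
  assumes "finite A" "\<And>a. a \<in> A \<Longrightarrow> p a > 0" "a \<in> A"
  shows "0 < fibre_mass A p f (f a)"
  using fibre_mass_ge[of A p a f] assms by fastforce

lemma fin_entropy_cong:
  assumes "\<And>a a'. a \<in> A \<Longrightarrow> a' \<in> A \<Longrightarrow> f a = f a' \<longleftrightarrow> g a = g a'"
  shows "fin_entropy A p f = fin_entropy A p g"
proof -
  have "fibre_mass A p f (f a) = fibre_mass A p g (g a)" if "a \<in> A" for a
    unfolding fibre_mass_def using assms that by (intro sum.cong) auto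
  thus ?thesis
    unfolding fin_entropy_def by simp
qed

lemma fin_entropy_const:
  "sum p A = 1 \<Longrightarrow> fin_entropy A p (\<lambda>_. c) = 0"
  unfolding fin_entropy_def fibre_mass_def by simp

lemma sum_fibre_mass_image:
  assumes "finite A"
  shows "(\<Sum>u\<in>f ` A. sum p {a\<in>A. f a = u \<and> P a}) = sum p {a\<in>A. P a}"
proof -
  have "sum p {a\<in>A. P a} = (\<Sum>a\<in>A. if P a then p a else 0)"
    using assms by (rule sum.inter_filter)
  also have "\<dots> = (\<Sum>u\<in>f ` A. \<Sum>a\<in>{a\<in>A. f a = u}. if P a then p a else 0)"
    using assms by (rule sum.image_gen)
  also have "\<dots> = (\<Sum>u\<in>f ` A. sum p {a\<in>A. f a = u \<and> P a})"
  proof (rule sum.cong[OF refl])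
    fix u
    have "(\<Sum>a\<in>{a\<in>A. f a = u}. if P a then p a else 0) = sum p {a\<in>{a\<in>A. f a = u}. P a}"
      using assms by (intro sum.inter_filter[symmetric]) simp
    also have "{a\<in>{a\<in>A. f a = u}. P a} = {a\<in>A. f a = u \<and> P a}"
      by blast
    finally show "(\<Sum>a\<in>{a\<in>A. f a = u}. if P a then p a else 0) = sum p {a\<in>A. f a = u \<and> P a}" .
  qed
  finally show ?thesis ..
qed

lemma sum_div_fibre_mass:
  assumes "finite A" "\<And>a. a \<in> A \<Longrightarrow> p a > 0"
  shows "(\<Sum>a\<in>A. p a / fibre_mass A p f (f a) * G (f a)) = (\<Sum>v\<in>f ` A. G v)"
proof -
  have "(\<Sum>a\<in>A. p a / fibre_mass A p f (f a) * G (f a))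
      = (\<Sum>v\<in>f ` A. \<Sum>a\<in>{a\<in>A. f a = v}. p a / fibre_mass A p f v * G v)"
    using assms by (subst sum.image_gen[of A _ f]) auto
  also have "\<dots> = (\<Sum>v\<in>f ` A. G v)"
  proof (intro sum.cong refl)
    fix v assume "v \<in> f ` A"
    then obtain a where "a \<in> A" "f a = v" by auto
    hence "fibre_mass A p f v > 0"
      using fibre_mass_pos[of A p a f] assms by blast
    thus "(\<Sum>a\<in>{a\<in>A. f a = v}. p a / fibre_mass A p f v * G v) = G v"
      by (simp add: sum_distrib_right[symmetric] sum_divide_distrib[symmetric] fibre_mass_def)
  qed
  finally show ?thesis .
qed

lemma sum_cond_indep_law:
  assumes fin: "finite A" and pos: "\<And>a. a \<in> A \<Longrightarrow> p a > 0" and one: "sum p A = 1"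
  shows "(\<Sum>(u, v, w)\<in>f ` A \<times> g ` A \<times> h ` A.
      fibre_mass A p (\<lambda>a. (f a, h a)) (u, w) * fibre_mass A p (\<lambda>a. (g a, h a)) (v, w)
        / fibre_mass A p h w) = 1"
    (is "(\<Sum>(u, v, w)\<in>_. ?Mfh (u, w) * ?Mgh (v, w) / ?Mh w) = 1")
proof -
  have marg: "(\<Sum>u\<in>f ` A. ?Mfh (u, w)) = ?Mh w" "(\<Sum>v\<in>g ` A. ?Mgh (v, w)) = ?Mh w" for w
    unfolding fibre_mass_def using sum_fibre_mass_image[OF fin, where P = "\<lambda>a. h a = w"]
    by simp_all
  have "(\<Sum>(u, v, w)\<in>f ` A \<times> g ` A \<times> h ` A. ?Mfh (u, w) * ?Mgh (v, w) / ?Mh w)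
      = (\<Sum>u\<in>f ` A. \<Sum>v\<in>g ` A. \<Sum>w\<in>h ` A. ?Mfh (u, w) * ?Mgh (v, w) / ?Mh w)"
    by (simp add: sum.cartesian_product)
  also have "\<dots> = (\<Sum>w\<in>h ` A. \<Sum>u\<in>f ` A. \<Sum>v\<in>g ` A. ?Mfh (u, w) * ?Mgh (v, w) / ?Mh w)"
    by (subst sum.swap, subst (2) sum.swap) (rule refl)
  also have "\<dots> = (\<Sum>w\<in>h ` A. (\<Sum>u\<in>f ` A. ?Mfh (u, w)) * (\<Sum>v\<in>g ` A. ?Mgh (v, w)) / ?Mh w)"
    by (simp only: sum_product sum_divide_distrib)
  also have "\<dots> = (\<Sum>w\<in>h ` A. ?Mh w)"
  proof (intro sum.cong refl)
    fix w assume "w \<in> h ` A"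
    hence "?Mh w > 0"
      using fibre_mass_pos[of A p _ h] fin pos by blast
    thus "(\<Sum>u\<in>f ` A. ?Mfh (u, w)) * (\<Sum>v\<in>g ` A. ?Mgh (v, w)) / ?Mh w = ?Mh w"
      by (simp add: marg)
  qed
  also have "\<dots> = 1"
    using one fin unfolding fibre_mass_def by (simp add: sum.image_gen[symmetric])
  finally show ?thesis .
qed

lemma fin_entropy_submodular:
  fixes f :: "'a \<Rightarrow> 'b" and g :: "'a \<Rightarrow> 'c" and h :: "'a \<Rightarrow> 'd"
  assumes fin: "finite A" and pos: "\<And>a. a \<in> A \<Longrightarrow> p a > 0" and one: "sum p A = 1"
  shows "fin_entropy A p (\<lambda>a. (f a, g a, h a)) + fin_entropy A p h
           \<le> fin_entropy A p (\<lambda>a. (f a, h a)) + fin_entropy A p (\<lambda>a. (g a, h a))"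
proof -
  define \<phi> where "\<phi> a = (f a, g a, h a)" for a
  define M where "M = fibre_mass A p \<phi>"
  define Mh where "Mh = fibre_mass A p h"
  define Mfh where "Mfh = fibre_mass A p (\<lambda>a. (f a, h a))"
  define Mgh where "Mgh = fibre_mass A p (\<lambda>a. (g a, h a))"
  \<comment> \<open>the law of \<open>(f, g, h)\<close> under which \<open>f\<close> and \<open>g\<close> are conditionally independent given \<open>h\<close>\<close>
  define G where "G = (\<lambda>(u, v, w). Mfh (u, w) * Mgh (v, w) / Mh w)"
  define q where "q a = p a / M (\<phi> a) * G (\<phi> a)" for a
  have masses_pos: "M (\<phi> a) > 0" "Mh (h a) > 0" "Mfh (f a, h a) > 0" "Mgh (g a, h a) > 0"
    if "a \<in> A" for a
    unfolding M_def Mh_def Mfh_def Mgh_def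
    using fibre_mass_pos[of A p a] fin pos that by auto
  have q_pos: "q a > 0" if "a \<in> A" for a
    using masses_pos[OF that] pos[OF that] by (simp add: q_def G_def \<phi>_def)
  have "sum q A = (\<Sum>t\<in>\<phi> ` A. G t)"
    unfolding q_def M_def by (rule sum_div_fibre_mass[OF fin pos])
  also have "\<dots> \<le> (\<Sum>t\<in>f ` A \<times> g ` A \<times> h ` A. G t)"
    using fin pos by (intro sum_mono2)
      (auto simp: \<phi>_def G_def Mh_def Mfh_def Mgh_def
        intro!: divide_nonneg_nonneg mult_nonneg_nonneg fibre_mass_nonneg)
  also have "\<dots> = 1"
    unfolding G_def Mh_def Mfh_def Mgh_def by (rule sum_cond_indep_law[OF fin pos one])
  finally have q_le_1: "sum q A \<le> 1" .
  have "p a * log 2 (p a / q a)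
      = p a * log 2 (M (\<phi> a)) + p a * log 2 (Mh (h a))
        - p a * log 2 (Mfh (f a, h a)) - p a * log 2 (Mgh (g a, h a))" if "a \<in> A" for a
  proof -
    have "p a / q a = (M (\<phi> a) * Mh (h a)) / (Mfh (f a, h a) * Mgh (g a, h a))"
      using pos[OF that] masses_pos[OF that] by (simp add: q_def G_def \<phi>_def)
    thus ?thesis
      using masses_pos[OF that] by (simp add: log_divide log_mult algebra_simps)
  qed
  hence "(\<Sum>a\<in>A. p a * log 2 (p a / q a))
      = (fin_entropy A p (\<lambda>a. (f a, h a)) + fin_entropy A p (\<lambda>a. (g a, h a)))
        - (fin_entropy A p \<phi> + fin_entropy A p h)"
    unfolding fin_entropy_def M_def Mh_def Mfh_def Mgh_def
    by (simp add: sum.distrib sum_subtractf)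
  moreover have "0 \<le> (\<Sum>a\<in>A. p a * log 2 (p a / q a))"
    using fin pos q_pos one q_le_1 by (rule gibbs_inequality)
  ultimately show ?thesis
    unfolding \<phi>_def by linarith
qed

section \<open>Concavity of entropy and the capacity density\<close>

definition eta :: "real \<Rightarrow> real" where
  "eta t = - (t * log 2 t)"

lemma eta_concave:
  fixes l a b :: real
  assumes l: "0 \<le> l" "l \<le> 1" and ab: "0 \<le> a" "0 \<le> b"
  shows "l * eta a + (1 - l) * eta b \<le> eta (l * a + (1 - l) * b)"
proof -
  define c where "c = l * a + (1 - l) * b"
  consider "c = 0" | "c > 0"
    using l ab unfolding c_def by (smt (verit) mult_nonneg_nonneg)
  thus ?thesis
  proof cases
    case 1
    hence "l * a = 0" "(1 - l) * b = 0"
      using l ab unfolding c_def by (smt (verit) mult_nonneg_nonneg)+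
    thus ?thesis
      using 1 unfolding eta_def c_def by (auto simp: mult.assoc[symmetric])
  next
    case 2
    have "0 = l * ((a - c) / ln 2) + (1 - l) * ((b - c) / ln 2)"
      unfolding c_def by (simp add: field_simps)
    also have "\<dots> \<le> l * (a * log 2 a - a * log 2 c) + (1 - l) * (b * log 2 b - b * log 2 c)"
      using l mult_log_diff_ge[OF ab(1) 2] mult_log_diff_ge[OF ab(2) 2]
      by (intro add_mono mult_left_mono) auto
    also have "\<dots> = eta c - l * eta a - (1 - l) * eta b"
      unfolding eta_def c_def by (simp add: algebra_simps)
    finally show ?thesis
      unfolding c_def by simp
  qed
qed

lemma mult_log_div_mult_eq_eta:
  fixes T t :: real
  assumes "T > 0" "t \<ge> 0"
  shows "(T * t) * log 2 (T / (T * t)) = T * eta t"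
  using assms by (cases "t = 0") (auto simp: eta_def log_divide log_mult)

definition capacity_density :: "(bool \<Rightarrow> 'y \<Rightarrow> real) \<Rightarrow> 'y \<Rightarrow> real" where
  "capacity_density W y = (\<Sum>x\<in>UNIV. W x y * log 2 (W x y / (W False y / 2 + W True y / 2)))"

lemma capacity_eq_infsum: "capacity W = (1/2) * infsum (capacity_density W) UNIV"
  unfolding capacity_def capacity_density_def ..

lemma capacity_density_eq:
  assumes "0 \<le> W False y" "0 \<le> W True y"
  shows "capacity_density W y
    = 2 * eta ((W False y + W True y) / 2) - eta (W False y) - eta (W True y)"
proof -
  have term_eq: "a * log 2 (a / (W False y / 2 + W True y / 2))
      = a * log 2 a - a * log 2 (W False y / 2 + W True y / 2)"
    if "a = W False y \<or> a = W True y" for a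
    using that assms by (cases "a = 0") (auto simp: log_divide right_diff_distrib)
  show ?thesis
    unfolding capacity_density_def UNIV_bool eta_def
    by (simp add: term_eq algebra_simps add_divide_distrib)
qed

lemma capacity_density_nonneg:
  assumes "0 \<le> W False y" "0 \<le> W True y"
  shows "0 \<le> capacity_density W y"
  using eta_concave[of "1/2" "W False y" "W True y"] assms
  by (simp add: capacity_density_eq add_divide_distrib)

section \<open>Channels with a finite output alphabet\<close>

locale finite_channel =
  fixes V :: "bool \<Rightarrow> 'z \<Rightarrow> real" and Z :: "'z set"
  assumes finite_Z: "finite Z" and V_nonneg: "\<And>b z. 0 \<le> V b z" and V_sum: "\<And>b. sum (V b) Z = 1"
begin

definition channel_entropy :: "bool \<Rightarrow> real" where
  "channel_entropy b = (\<Sum>z\<in>Z. eta (V b z))"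

definition mixture_entropy :: real where
  "mixture_entropy = (\<Sum>z\<in>Z. eta ((V False z + V True z) / 2))"

definition entropy_gap :: real where
  "entropy_gap = \<bar>mixture_entropy - channel_entropy False\<bar> + \<bar>mixture_entropy - channel_entropy True\<bar>"

lemma entropy_gap_nonneg: "0 \<le> entropy_gap"
  unfolding entropy_gap_def by simp

lemma mixture_entropy_le:
  assumes "0 \<le> l" "l \<le> 1"
  shows "mixture_entropy - (1 - l) * entropy_gap
    \<le> (\<Sum>z\<in>Z. eta (l * ((V False z + V True z) / 2) + (1 - l) * V e z))"
proof -
  have "mixture_entropy - channel_entropy e \<le> entropy_gap"
    unfolding entropy_gap_def by (cases e) auto
  hence "mixture_entropy - (1 - l) * entropy_gap \<le> l * mixture_entropy + (1 - l) * channel_entropy e"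
    using assms mult_left_mono[of "mixture_entropy - channel_entropy e" entropy_gap "1 - l"]
    by (simp add: algebra_simps)
  also have "\<dots> = (\<Sum>z\<in>Z. l * eta ((V False z + V True z) / 2) + (1 - l) * eta (V e z))"
    unfolding mixture_entropy_def channel_entropy_def by (simp add: sum.distrib sum_distrib_left)
  also have "\<dots> \<le> (\<Sum>z\<in>Z. eta (l * ((V False z + V True z) / 2) + (1 - l) * V e z))"
    using assms V_nonneg by (intro sum_mono eta_concave) auto
  finally show ?thesis .
qed

lemma mixed_output_entropy_ge_ordered:
  fixes s t :: real and e :: bool
  assumes "0 \<le> s" "s \<le> t"
  defines "\<mu> z \<equiv> s * (V False z + V True z) + (t - s) * V e z"
  shows "(s + t) * mixture_entropy - (t - s) * entropy_gap
    \<le> (\<Sum>z\<in>Z. \<mu> z * log 2 ((s + t) / \<mu> z))"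
proof (cases "s + t = 0")
  case False
  define T where "T = s + t"
  define l where "l = 2 * s / T"
  have T: "T > 0" and l: "0 \<le> l" "l \<le> 1" and l': "T * (1 - l) = t - s"
    using assms False by (auto simp: T_def l_def field_simps)
  have \<mu>: "\<mu> z = T * (l * ((V False z + V True z) / 2) + (1 - l) * V e z)" for z
    using T by (simp add: \<mu>_def l_def field_simps) (simp add: T_def algebra_simps)
  have "T * mixture_entropy - (t - s) * entropy_gap = T * (mixture_entropy - (1 - l) * entropy_gap)"
    by (simp add: l'[symmetric] algebra_simps)
  also have "\<dots> \<le> T * (\<Sum>z\<in>Z. eta (l * ((V False z + V True z) / 2) + (1 - l) * V e z))"
    using T mixture_entropy_le[OF l] by simp
  also have "\<dots> = (\<Sum>z\<in>Z. \<mu> z * log 2 (T / \<mu> z))"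
    unfolding \<mu> sum_distrib_left using T l V_nonneg
    by (intro sum.cong refl mult_log_div_mult_eq_eta[symmetric]) auto
  finally show ?thesis
    unfolding T_def .
next
  case True
  hence "s = 0" "t = 0"
    using assms by auto
  thus ?thesis
    by (simp add: \<mu>_def)
qed

lemma mixed_output_entropy_ge:
  fixes J0 J1 :: real
  assumes "0 \<le> J0" "0 \<le> J1"
  shows "(J0 + J1) * mixture_entropy - entropy_gap * (J0 + J1 - 2 * min J0 J1)
    \<le> (\<Sum>z\<in>Z. (V False z * J0 + V True z * J1) * log 2 ((J0 + J1) / (V False z * J0 + V True z * J1)))"
proof (cases "J0 \<le> J1")
  case True
  thus ?thesis
    using mixed_output_entropy_ge_ordered[of J0 J1 True] assms
    by (simp add: algebra_simps min_def)
next
  case False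
  thus ?thesis
    using mixed_output_entropy_ge_ordered[of J1 J0 False] assms
    by (simp add: algebra_simps min_def)
qed

definition finite_capacity :: real where
  "finite_capacity = (1/2) * (\<Sum>z\<in>Z. capacity_density V z)"

lemma finite_capacity_eq:
  "finite_capacity = mixture_entropy - (channel_entropy False + channel_entropy True) / 2"
  unfolding finite_capacity_def mixture_entropy_def channel_entropy_def
  by (simp add: capacity_density_eq V_nonneg sum_subtractf sum_distrib_left[symmetric]
      sum.distrib algebra_simps)

end

section \<open>Balanced codes over a finite channel\<close>

lemma finite_binary_code:
  assumes "binary_code n C"
  shows "finite C"
proof -
  have "{x. \<forall>k\<ge>n. x k = False} \<subseteq> (\<lambda>S k. k \<in> S) ` Pow {..<n}"
  proof
    fix x :: "nat \<Rightarrow> bool" assume x: "x \<in> {x. \<forall>k\<ge>n. x k = False}"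
    have "x = (\<lambda>k. k \<in> {k\<in>{..<n}. x k})"
    proof
      fix k
      show "x k = (k \<in> {k\<in>{..<n}. x k})"
        using x by (cases "k < n") auto
    qed
    thus "x \<in> (\<lambda>S k. k \<in> S) ` Pow {..<n}"
      by blast
  qed
  hence "finite {x. \<forall>k\<ge>n. x k = False}"
    by (rule finite_subset) simp
  thus ?thesis
    using assms unfolding binary_code_def by (blast intro: finite_subset)
qed

lemma restrict_Un_eq_iff:
  "restrict y (S \<union> T) = restrict y' (S \<union> T)
     \<longleftrightarrow> restrict y S = restrict y' S \<and> restrict y T = restrict y' T"
  by (auto simp: fun_eq_iff restrict_def)

locale balanced_code_channel = finite_channel V Z
  for V :: "bool \<Rightarrow> 'z \<Rightarrow> real" and Z :: "'z set" +
  fixes m :: nat and C :: "(nat \<Rightarrow> bool) set"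
  assumes finite_C: "finite C" and C_nonempty: "C \<noteq> {}"
    and balanced: "\<And>j. j < m \<Longrightarrow> 2 * card {x\<in>C. x j} = card C"
begin

definition outputs :: "(nat \<Rightarrow> 'z) set" where
  "outputs = PiE {..<m} (\<lambda>_. Z)"

definition outputs_except :: "nat \<Rightarrow> (nat \<Rightarrow> 'z) set" where
  "outputs_except k = PiE ({..<m}-{k}) (\<lambda>_. Z)"

definition likelihood :: "(nat \<Rightarrow> bool) \<Rightarrow> (nat \<Rightarrow> 'z) \<Rightarrow> real" where
  "likelihood x y = (\<Prod>k<m. V (x k) (y k))"

definition joint :: "(nat \<Rightarrow> bool) \<times> (nat \<Rightarrow> 'z) \<Rightarrow> real" where
  "joint a = likelihood (fst a) (snd a) / card C"

definition supp :: "((nat \<Rightarrow> bool) \<times> (nat \<Rightarrow> 'z)) set" where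
  "supp = {a \<in> C \<times> outputs. joint a > 0}"

definition out_entropy :: "nat set \<Rightarrow> real" where
  "out_entropy S = fin_entropy supp joint (\<lambda>a. restrict (snd a) S)"

definition out_prob :: "(nat \<Rightarrow> 'z) \<Rightarrow> real" where
  "out_prob y = (\<Sum>x\<in>C. likelihood x y) / card C"

definition bit_error :: "nat \<Rightarrow> real" where
  "bit_error k = (\<Sum>w\<in>outputs_except k. min (joint_ext m C V k False w) (joint_ext m C V k True w))"

lemma card_C_pos: "card C > 0"
  using finite_C C_nonempty by (simp add: card_gt_0_iff)

lemma finite_outputs: "finite outputs"
  unfolding outputs_def using finite_Z by (intro finite_PiE) auto

lemma finite_supp: "finite supp"
  unfolding supp_def using finite_C finite_outputs by auto

lemma likelihood_nonneg: "0 \<le> likelihood x y"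
  unfolding likelihood_def using V_nonneg by (intro prod_nonneg) auto

lemma joint_nonneg: "0 \<le> joint a"
  unfolding joint_def using likelihood_nonneg by auto

lemma joint_pos: "a \<in> supp \<Longrightarrow> 0 < joint a"
  unfolding supp_def by auto

lemma joint_ext_nonneg: "0 \<le> joint_ext m C V k b w"
  unfolding joint_ext_def using V_nonneg by (intro divide_nonneg_nonneg sum_nonneg prod_nonneg) auto

lemma joint_ext_upd [simp]: "joint_ext m C V k b (w(k := z)) = joint_ext m C V k b w"
  unfolding joint_ext_def by (intro arg_cong[where f = "\<lambda>t. t / card C"] sum.cong prod.cong) auto

lemma outputs_insert:
  assumes "k < m"
  shows "outputs = (\<lambda>(z, w). w(k := z)) ` (Z \<times> outputs_except k)"
    and "inj_on (\<lambda>(z, w). w(k := z)) (Z \<times> outputs_except k)"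
proof -
  have "{..<m} = insert k ({..<m}-{k})"
    using assms by auto
  thus "outputs = (\<lambda>(z, w). w(k := z)) ` (Z \<times> outputs_except k)"
    unfolding outputs_def outputs_except_def by (metis PiE_insert_eq)
  show "inj_on (\<lambda>(z, w). w(k := z)) (Z \<times> outputs_except k)"
    unfolding outputs_except_def by (rule inj_combinator) simp
qed

lemma sum_outputs_split:
  assumes "k < m"
  shows "(\<Sum>y\<in>outputs. F y) = (\<Sum>w\<in>outputs_except k. \<Sum>z\<in>Z. F (w(k := z)))"
proof -
  have "(\<Sum>y\<in>outputs. F y) = (\<Sum>(z, w)\<in>Z \<times> outputs_except k. F (w(k := z)))"
    unfolding outputs_insert(1)[OF assms]
    by (subst sum.reindex[OF outputs_insert(2)[OF assms]]) (simp add: case_prod_beta')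
  also have "\<dots> = (\<Sum>z\<in>Z. \<Sum>w\<in>outputs_except k. F (w(k := z)))"
    by (rule sum.cartesian_product[symmetric])
  also have "\<dots> = (\<Sum>w\<in>outputs_except k. \<Sum>z\<in>Z. F (w(k := z)))"
    by (rule sum.swap)
  finally show ?thesis .
qed

lemma likelihood_remove:
  "k < m \<Longrightarrow> likelihood x y = V (x k) (y k) * (\<Prod>i\<in>{..<m}-{k}. V (x i) (y i))"
  unfolding likelihood_def by (intro prod.remove) auto

lemma sum_likelihood_mult:
  assumes k: "k < m"
  shows "(\<Sum>y\<in>outputs. likelihood x y * G (y k)) = (\<Sum>z\<in>Z. V (x k) z * G z)"
proof -
  define f where "f i z = (if i = k then V (x i) z * G z else V (x i) z)" for i z
  have "(\<Sum>y\<in>outputs. likelihood x y * G (y k)) = (\<Sum>y\<in>outputs. \<Prod>i<m. f i (y i))"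
  proof (intro sum.cong refl)
    fix y
    have "(\<Prod>i<m. f i (y i)) = f k (y k) * (\<Prod>i\<in>{..<m}-{k}. f i (y i))"
      using k by (intro prod.remove) auto
    thus "likelihood x y * G (y k) = (\<Prod>i<m. f i (y i))"
      by (simp add: likelihood_remove[OF k] f_def)
  qed
  also have "\<dots> = (\<Prod>i<m. \<Sum>z\<in>Z. f i z)"
    unfolding outputs_def using finite_Z by (intro prod_sum_PiE[symmetric]) auto
  also have "\<dots> = (\<Sum>z\<in>Z. f k z) * (\<Prod>i\<in>{..<m}-{k}. \<Sum>z\<in>Z. f i z)"
    using k by (intro prod.remove) auto
  also have "\<dots> = (\<Sum>z\<in>Z. V (x k) z * G z)"
    by (simp add: f_def V_sum)
  finally show ?thesis .
qed

lemma sum_likelihood: "(\<Sum>y\<in>outputs. likelihood x y) = 1"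
proof (cases "m = 0")
  case True
  thus ?thesis unfolding outputs_def likelihood_def by simp
next
  case False
  thus ?thesis
    using sum_likelihood_mult[of 0 x "\<lambda>_. 1"] by (simp add: V_sum)
qed

lemma sum_supp_eq: "(\<Sum>a\<in>supp. joint a * F a) = (\<Sum>a\<in>C \<times> outputs. joint a * F a)"
  using finite_C finite_outputs joint_nonneg
  by (intro sum.mono_neutral_left) (auto simp: supp_def order.order_iff_strict)

lemma sum_filter_supp_eq: "sum joint {a\<in>supp. P a} = sum joint {a\<in>C \<times> outputs. P a}"
  using finite_C finite_outputs joint_nonneg
  by (intro sum.mono_neutral_left) (auto simp: supp_def order.order_iff_strict)

lemma sum_joint: "sum joint supp = 1"
proof -
  have "sum joint supp = (\<Sum>x\<in>C. \<Sum>y\<in>outputs. likelihood x y / card C)"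
    using sum_supp_eq[of "\<lambda>_. 1"] by (simp add: sum.cartesian_product joint_def split_beta)
  also have "\<dots> = 1"
    using card_C_pos by (simp add: sum_divide_distrib[symmetric] sum_likelihood)
  finally show ?thesis .
qed

lemma sum_balanced:
  fixes F :: "bool \<Rightarrow> real"
  assumes k: "k < m"
  shows "(\<Sum>x\<in>C. F (x k)) = card C * (F False + F True) / 2"
proof -
  have C: "C = {x\<in>C. x k} \<union> {x\<in>C. \<not> x k}"
    by auto
  have card: "card C = card {x\<in>C. x k} + card {x\<in>C. \<not> x k}"
    using finite_C by (subst C, intro card_Un_disjoint) auto
  have "(\<Sum>x\<in>C. F (x k)) = (\<Sum>x\<in>{x\<in>C. x k}. F (x k)) + (\<Sum>x\<in>{x\<in>C. \<not> x k}. F (x k))"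
    using finite_C by (subst C, intro sum.union_disjoint) auto
  also have "\<dots> = card {x\<in>C. x k} * F True + card {x\<in>C. \<not> x k} * F False"
    by simp
  finally show ?thesis
    using balanced[OF k] card by (simp add: algebra_simps)
qed

lemma sum_C_by_bit:
  "(\<Sum>x\<in>C. F x) = (\<Sum>x\<in>{x\<in>C. x k = False}. F x) + (\<Sum>x\<in>{x\<in>C. x k = True}. F x)"
proof -
  have "C = {x\<in>C. x k = False} \<union> {x\<in>C. x k = True}"
    by auto
  thus ?thesis
    using finite_C by (subst (1) \<open>C = _\<close>, intro sum.union_disjoint) auto
qed

lemma joint_ext_add:
  "joint_ext m C V k False y + joint_ext m C V k True y
    = (\<Sum>x\<in>C. \<Prod>i\<in>{..<m}-{k}. V (x i) (y i)) / card C"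
  unfolding joint_ext_def by (subst sum_C_by_bit[of _ k]) (simp add: add_divide_distrib)

lemma sum_joint_ext:
  assumes "k < m"
  shows "(\<Sum>w\<in>outputs_except k. joint_ext m C V k False w + joint_ext m C V k True w) = 1"
proof -
  have "(\<Sum>w\<in>outputs_except k. \<Prod>i\<in>{..<m}-{k}. V (x i) (w i)) = 1" for x
  proof -
    have "(\<Sum>w\<in>outputs_except k. \<Prod>i\<in>{..<m}-{k}. V (x i) (w i)) = (\<Prod>i\<in>{..<m}-{k}. sum (V (x i)) Z)"
      unfolding outputs_except_def using finite_Z by (intro prod_sum_PiE[symmetric]) auto
    thus ?thesis
      by (simp add: V_sum)
  qed
  hence "(\<Sum>x\<in>C. \<Sum>w\<in>outputs_except k. \<Prod>i\<in>{..<m}-{k}. V (x i) (w i)) = card C"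
    by simp
  thus ?thesis
    using card_C_pos unfolding joint_ext_add sum_divide_distrib[symmetric]
    by (subst sum.swap) simp
qed

lemma out_prob_eq_joint_ext:
  assumes k: "k < m"
  shows "out_prob y = V False (y k) * joint_ext m C V k False y + V True (y k) * joint_ext m C V k True y"
proof -
  have "out_prob y = (\<Sum>x\<in>C. V (x k) (y k) * (\<Prod>i\<in>{..<m}-{k}. V (x i) (y i))) / card C"
    unfolding out_prob_def using likelihood_remove[OF k] by simp
  also have "\<dots> = V False (y k) * joint_ext m C V k False y + V True (y k) * joint_ext m C V k True y"
    unfolding joint_ext_def sum_C_by_bit[of _ k]
    by (simp add: sum_distrib_left[symmetric] add_divide_distrib)
  finally show ?thesis .
qed

lemma out_entropy_empty: "out_entropy {} = 0"
  unfolding out_entropy_def by (simp add: restrict_def fin_entropy_const[OF sum_joint])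

lemma out_entropy_submodular:
  "out_entropy (S \<union> T \<union> U) + out_entropy U \<le> out_entropy (S \<union> U) + out_entropy (T \<union> U)"
proof -
  let ?H = "fin_entropy supp joint"
  have "?H (\<lambda>a. (restrict (snd a) S, restrict (snd a) T, restrict (snd a) U)) + ?H (\<lambda>a. restrict (snd a) U)
     \<le> ?H (\<lambda>a. (restrict (snd a) S, restrict (snd a) U)) + ?H (\<lambda>a. (restrict (snd a) T, restrict (snd a) U))"
    using finite_supp joint_pos sum_joint by (rule fin_entropy_submodular)
  moreover have "?H (\<lambda>a. (restrict (snd a) S, restrict (snd a) T, restrict (snd a) U)) = out_entropy (S \<union> T \<union> U)"
    "?H (\<lambda>a. (restrict (snd a) S, restrict (snd a) U)) = out_entropy (S \<union> U)"
    "?H (\<lambda>a. (restrict (snd a) T, restrict (snd a) U)) = out_entropy (T \<union> U)"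
    unfolding out_entropy_def by (auto intro!: fin_entropy_cong simp: restrict_Un_eq_iff)
  ultimately show ?thesis
    unfolding out_entropy_def by simp
qed

lemma han_inequality: "(\<Sum>k<m. out_entropy {..<m} - out_entropy ({..<m}-{k})) \<le> out_entropy {..<m}"
proof -
  have step: "out_entropy {..<m} - out_entropy ({..<m}-{k}) \<le> out_entropy {..<Suc k} - out_entropy {..<k}"
    if "k < m" for k
  proof -
    have "{..<m} = {k} \<union> {Suc k..<m} \<union> {..<k}" "{..<m}-{k} = {Suc k..<m} \<union> {..<k}"
      "{..<Suc k} = {k} \<union> {..<k}"
      using that by auto
    thus ?thesis
      using out_entropy_submodular[of "{k}" "{Suc k..<m}" "{..<k}"] by simp
  qed
  have "(\<Sum>k<m. out_entropy {..<m} - out_entropy ({..<m}-{k})) \<le> (\<Sum>k<m. out_entropy {..<Suc k} - out_entropy {..<k})"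
    using step by (intro sum_mono) simp
  also have "\<dots> = out_entropy {..<m}"
    using sum_lessThan_telescope[of "\<lambda>k. out_entropy {..<k}" m] by (simp add: out_entropy_empty)
  finally show ?thesis .
qed

lemma out_entropy_le_joint_entropy:
  "out_entropy {..<m} \<le> - (\<Sum>a\<in>supp. joint a * log 2 (joint a))"
proof -
  let ?M = "fibre_mass supp joint (\<lambda>a. restrict (snd a) {..<m})"
  have "joint a * log 2 (joint a) \<le> joint a * log 2 (?M (restrict (snd a) {..<m}))" if "a \<in> supp" for a
    using fibre_mass_ge[of supp joint a] finite_supp joint_pos[OF that] that
    by (intro mult_left_mono log_mono) (auto intro: joint_pos)
  hence "(\<Sum>a\<in>supp. joint a * log 2 (joint a))
      \<le> (\<Sum>a\<in>supp. joint a * log 2 (?M (restrict (snd a) {..<m})))"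
    by (rule sum_mono)
  thus ?thesis
    unfolding out_entropy_def fin_entropy_def by simp
qed

lemma log_likelihood:
  assumes "likelihood x y > 0"
  shows "log 2 (likelihood x y) = (\<Sum>k<m. log 2 (V (x k) (y k)))"
proof -
  have "V (x k) (y k) \<noteq> 0" if "k < m" for k
    using assms likelihood_remove[OF that, of x y] by auto
  hence "ln (likelihood x y) = (\<Sum>k<m. ln (V (x k) (y k)))"
    unfolding likelihood_def by (intro ln_prod) auto
  thus ?thesis
    by (simp add: log_def sum_divide_distrib)
qed

lemma sum_joint_log_V:
  assumes k: "k < m"
  shows "(\<Sum>a\<in>supp. joint a * log 2 (V (fst a k) (snd a k)))
    = - (channel_entropy False + channel_entropy True) / 2"
proof -
  have "(\<Sum>a\<in>supp. joint a * log 2 (V (fst a k) (snd a k)))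
      = (\<Sum>x\<in>C. (\<Sum>y\<in>outputs. likelihood x y * log 2 (V (x k) (y k))) / card C)"
    unfolding sum_supp_eq by (simp add: sum.cartesian_product joint_def sum_divide_distrib split_beta)
  also have "\<dots> = (\<Sum>x\<in>C. - channel_entropy (x k) / card C)"
    using sum_likelihood_mult[OF k, of _ "\<lambda>z. log 2 (V _ z)"]
    by (simp add: channel_entropy_def eta_def sum_negf)
  also have "\<dots> = card C * (- channel_entropy False / card C + - channel_entropy True / card C) / 2"
    by (rule sum_balanced[OF k])
  also have "\<dots> = - (channel_entropy False + channel_entropy True) / 2"
    using card_C_pos by (simp add: field_simps)
  finally show ?thesis .
qed

lemma joint_entropy_eq:
  "- (\<Sum>a\<in>supp. joint a * log 2 (joint a))
    = log 2 (card C) + m * ((channel_entropy False + channel_entropy True) / 2)"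
proof -
  have "joint a * log 2 (joint a)
      = (\<Sum>k<m. joint a * log 2 (V (fst a k) (snd a k))) - joint a * log 2 (card C)"
    if "a \<in> supp" for a
  proof -
    have "likelihood (fst a) (snd a) > 0"
      using joint_pos[OF that] card_C_pos by (simp add: joint_def zero_less_divide_iff)
    thus ?thesis
      using card_C_pos
      by (simp add: joint_def log_divide log_likelihood sum_distrib_left right_diff_distrib)
  qed
  hence "(\<Sum>a\<in>supp. joint a * log 2 (joint a))
      = (\<Sum>k<m. \<Sum>a\<in>supp. joint a * log 2 (V (fst a k) (snd a k))) - log 2 (card C)"
    by (simp add: sum_subtractf sum.swap[of _ supp] sum_distrib_right[symmetric] sum_joint)
  also have "\<dots> = - (m * ((channel_entropy False + channel_entropy True) / 2)) - log 2 (card C)"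
    by (simp add: sum_joint_log_V algebra_simps)
  finally show ?thesis
    by simp
qed

lemma fibre_mass_outputs:
  assumes "a \<in> supp"
  shows "fibre_mass supp joint (\<lambda>a. restrict (snd a) {..<m}) (restrict (snd a) {..<m}) = out_prob (snd a)"
proof -
  have restrict_id: "restrict y {..<m} = y" if "y \<in> outputs" for y
    using that unfolding outputs_def by (rule PiE_restrict)
  have "snd a \<in> outputs"
    using assms unfolding supp_def by auto
  hence "{a'\<in>C \<times> outputs. restrict (snd a') {..<m} = restrict (snd a) {..<m}} = C \<times> {snd a}"
    using restrict_id by auto
  hence "fibre_mass supp joint (\<lambda>a. restrict (snd a) {..<m}) (restrict (snd a) {..<m})
      = sum joint (C \<times> {snd a})"
    unfolding fibre_mass_def sum_filter_supp_eq by simp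
  also have "\<dots> = out_prob (snd a)"
    unfolding out_prob_def joint_def sum_divide_distrib by (simp add: sum.cartesian_product')
  finally show ?thesis .
qed

lemma outputs_fibre_except:
  assumes k: "k < m" and y: "y \<in> outputs"
  shows "{y'\<in>outputs. restrict y' ({..<m}-{k}) = restrict y ({..<m}-{k})} = (\<lambda>z. y(k := z)) ` Z"
proof (intro equalityI subsetI)
  fix y' assume "y' \<in> {y'\<in>outputs. restrict y' ({..<m}-{k}) = restrict y ({..<m}-{k})}"
  hence "y' = y(k := y' k)" "y' k \<in> Z"
    using y k unfolding outputs_def
    by (auto simp: fun_eq_iff restrict_def PiE_def extensional_def) metis
  thus "y' \<in> (\<lambda>z. y(k := z)) ` Z"
    by (intro image_eqI)
next
  fix y' assume "y' \<in> (\<lambda>z. y(k := z)) ` Z"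
  thus "y' \<in> {y'\<in>outputs. restrict y' ({..<m}-{k}) = restrict y ({..<m}-{k})}"
    using y k unfolding outputs_def by (auto simp: PiE_iff extensional_def restrict_def)
qed

lemma fibre_mass_outputs_except:
  assumes k: "k < m" and a: "a \<in> supp"
  shows "fibre_mass supp joint (\<lambda>a. restrict (snd a) ({..<m}-{k})) (restrict (snd a) ({..<m}-{k}))
    = joint_ext m C V k False (snd a) + joint_ext m C V k True (snd a)"
proof -
  define y where "y = snd a"
  let ?D = "{..<m}-{k}"
  have "y \<in> outputs"
    using a unfolding supp_def y_def by auto
  have "{a'\<in>C \<times> outputs. restrict (snd a') ?D = restrict y ?D}
      = C \<times> {y'\<in>outputs. restrict y' ?D = restrict y ?D}"
    by auto
  also have "\<dots> = C \<times> ((\<lambda>z. y(k := z)) ` Z)"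
    unfolding outputs_fibre_except[OF k \<open>y \<in> outputs\<close>] ..
  finally have fibre: "{a'\<in>C \<times> outputs. restrict (snd a') ?D = restrict y ?D} = C \<times> ((\<lambda>z. y(k := z)) ` Z)" .
  have "inj_on (\<lambda>z. y(k := z)) Z"
    by (rule inj_onI) (metis fun_upd_same)
  hence "fibre_mass supp joint (\<lambda>a. restrict (snd a) ?D) (restrict y ?D)
      = (\<Sum>x\<in>C. \<Sum>z\<in>Z. joint (x, y(k := z)))"
    unfolding fibre_mass_def sum_filter_supp_eq fibre by (simp add: sum.cartesian_product' sum.reindex)
  also have "\<dots> = (\<Sum>x\<in>C. \<Prod>i\<in>?D. V (x i) (y i)) / card C"
    unfolding sum_divide_distrib
  proof (intro sum.cong refl)
    fix x
    have "(\<Prod>i\<in>?D. V (x i) ((y(k := z)) i)) = (\<Prod>i\<in>?D. V (x i) (y i))" for z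
      by (intro prod.cong) auto
    hence "(\<Sum>z\<in>Z. joint (x, y(k := z))) = (\<Sum>z\<in>Z. V (x k) z) * (\<Prod>i\<in>?D. V (x i) (y i)) / card C"
      by (simp add: joint_def likelihood_remove[OF k] sum_distrib_right sum_divide_distrib)
    thus "(\<Sum>z\<in>Z. joint (x, y(k := z))) = (\<Prod>i\<in>?D. V (x i) (y i)) / card C"
      by (simp add: V_sum)
  qed
  finally show ?thesis
    unfolding joint_ext_add y_def .
qed

text \<open>The left-hand side is H(Y_k | Y_-k): given the other outputs w, the output Y_k has the
  law \<open>V False z * J False w + V True z * J True w\<close> of total mass \<open>J False w + J True w\<close>.\<close>

lemma out_entropy_drop_eq:
  assumes k: "k < m"
  defines "J b w \<equiv> joint_ext m C V k b w"
  shows "out_entropy {..<m} - out_entropy ({..<m}-{k})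
    = (\<Sum>w\<in>outputs_except k. \<Sum>z\<in>Z.
        (V False z * J False w + V True z * J True w)
          * log 2 ((J False w + J True w) / (V False z * J False w + V True z * J True w)))"
proof -
  define T where "T y = J False y + J True y" for y
  let ?M = "\<lambda>S a. fibre_mass supp joint (\<lambda>a. restrict (snd a) S) (restrict (snd a) S)"
  have "out_entropy {..<m} - out_entropy ({..<m}-{k})
      = (\<Sum>a\<in>supp. joint a * (log 2 (?M ({..<m}-{k}) a) - log 2 (?M {..<m} a)))"
    unfolding out_entropy_def fin_entropy_def by (simp add: sum_subtractf right_diff_distrib)
  also have "\<dots> = (\<Sum>a\<in>supp. joint a * log 2 (T (snd a) / out_prob (snd a)))"
  proof (intro sum.cong refl)
    fix a assume a: "a \<in> supp"
    have "0 < ?M ({..<m}-{k}) a" "0 < ?M {..<m} a"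
      using fibre_mass_pos[of supp joint a] finite_supp joint_pos a by auto
    thus "joint a * (log 2 (?M ({..<m}-{k}) a) - log 2 (?M {..<m} a))
        = joint a * log 2 (T (snd a) / out_prob (snd a))"
      unfolding fibre_mass_outputs[OF a] fibre_mass_outputs_except[OF k a] T_def J_def
      by (simp add: log_divide)
  qed
  also have "\<dots> = (\<Sum>a\<in>C \<times> outputs. joint a * log 2 (T (snd a) / out_prob (snd a)))"
    by (rule sum_supp_eq)
  also have "\<dots> = (\<Sum>y\<in>outputs. out_prob y * log 2 (T y / out_prob y))"
    unfolding sum.cartesian_product' out_prob_def joint_def
    by (subst sum.swap) (simp add: sum_divide_distrib sum_distrib_right)
  also have "\<dots> = (\<Sum>w\<in>outputs_except k. \<Sum>z\<in>Z. out_prob (w(k := z)) * log 2 (T (w(k := z)) / out_prob (w(k := z))))"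
    by (rule sum_outputs_split[OF k])
  also have "\<dots> = (\<Sum>w\<in>outputs_except k. \<Sum>z\<in>Z.
        (V False z * J False w + V True z * J True w)
          * log 2 ((J False w + J True w) / (V False z * J False w + V True z * J True w)))"
    by (simp add: out_prob_eq_joint_ext[OF k] T_def J_def)
  finally show ?thesis .
qed

lemma out_entropy_drop_ge:
  assumes k: "k < m"
  shows "mixture_entropy - entropy_gap * (1 - 2 * bit_error k)
    \<le> out_entropy {..<m} - out_entropy ({..<m}-{k})"
proof -
  define J where "J b w = joint_ext m C V k b w" for b w
  have "(\<Sum>w\<in>outputs_except k. (J False w + J True w) * mixture_entropy
          - entropy_gap * (J False w + J True w - 2 * min (J False w) (J True w)))
      = (\<Sum>w\<in>outputs_except k. J False w + J True w) * mixture_entropy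
          - entropy_gap * ((\<Sum>w\<in>outputs_except k. J False w + J True w)
            - 2 * (\<Sum>w\<in>outputs_except k. min (J False w) (J True w)))"
    by (simp add: sum_subtractf sum_distrib_left[symmetric] sum_distrib_right)
  hence "mixture_entropy - entropy_gap * (1 - 2 * bit_error k)
      = (\<Sum>w\<in>outputs_except k. (J False w + J True w) * mixture_entropy
          - entropy_gap * (J False w + J True w - 2 * min (J False w) (J True w)))"
    using sum_joint_ext[OF k] by (simp add: bit_error_def J_def)
  also have "\<dots> \<le> (\<Sum>w\<in>outputs_except k. \<Sum>z\<in>Z.
        (V False z * J False w + V True z * J True w)
          * log 2 ((J False w + J True w) / (V False z * J False w + V True z * J True w)))"
    unfolding J_def by (intro sum_mono mixed_output_entropy_ge joint_ext_nonneg)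
  also have "\<dots> = out_entropy {..<m} - out_entropy ({..<m}-{k})"
    unfolding J_def by (rule out_entropy_drop_eq[OF k, symmetric])
  finally show ?thesis .
qed

theorem log_card_ge:
  assumes "\<And>k. k < m \<Longrightarrow> p \<le> bit_error k"
  shows "m * (finite_capacity - entropy_gap * (1 - 2 * p)) \<le> log 2 (card C)"
proof -
  have "m * (mixture_entropy - entropy_gap * (1 - 2 * p))
      = (\<Sum>k<m. mixture_entropy - entropy_gap * (1 - 2 * p))"
    by simp
  also have "\<dots> \<le> (\<Sum>k<m. mixture_entropy - entropy_gap * (1 - 2 * bit_error k))"
    using assms entropy_gap_nonneg by (intro sum_mono) (simp add: mult_left_mono)
  also have "\<dots> \<le> (\<Sum>k<m. out_entropy {..<m} - out_entropy ({..<m}-{k}))"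
    by (intro sum_mono out_entropy_drop_ge) simp
  also have "\<dots> \<le> out_entropy {..<m}"
    by (rule han_inequality)
  also have "\<dots> \<le> log 2 (card C) + m * ((channel_entropy False + channel_entropy True) / 2)"
    using out_entropy_le_joint_entropy joint_entropy_eq by simp
  finally show ?thesis
    by (simp add: finite_capacity_eq algebra_simps)
qed

end

section \<open>Quantizing a channel with countable output alphabet\<close>

definition quantize :: "'y set \<Rightarrow> 'y \<Rightarrow> 'y option" where
  "quantize F t = (if t \<in> F then Some t else None)"

definition quantized_channel :: "(bool \<Rightarrow> 'y \<Rightarrow> real) \<Rightarrow> 'y set \<Rightarrow> bool \<Rightarrow> 'y option \<Rightarrow> real" where
  "quantized_channel W F b z = (case z of Some y \<Rightarrow> W b y | None \<Rightarrow> 1 - sum (W b) F)"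

definition quantized_outputs :: "'y set \<Rightarrow> 'y option set" where
  "quantized_outputs F = insert None (Some ` F)"

locale binary_input_channel =
  fixes W :: "bool \<Rightarrow> 'y::countable \<Rightarrow> real"
  assumes W_nonneg: "\<And>b y. 0 \<le> W b y" and W_has_sum: "\<And>b. (W b has_sum 1) UNIV"
begin

lemma sum_W_le_1: "finite T \<Longrightarrow> sum (W b) T \<le> 1"
  using W_nonneg by (intro finite_sum_le_has_sum[OF W_has_sum]) auto

lemma finite_channel_quantized:
  assumes "finite F"
  shows "finite_channel (quantized_channel W F) (quantized_outputs F)"
proof
  show "finite (quantized_outputs F)"
    unfolding quantized_outputs_def using assms by simp
  show "0 \<le> quantized_channel W F b z" for b z
    unfolding quantized_channel_def using W_nonneg sum_W_le_1[OF assms] by (cases z) auto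
  show "sum (quantized_channel W F b) (quantized_outputs F) = 1" for b
    unfolding quantized_outputs_def using assms
    by (simp add: sum.reindex quantized_channel_def)
qed

lemma sum_le_quantized_channel:
  assumes "finite F" "finite T" "\<And>t. t \<in> T \<Longrightarrow> quantize F t = z"
  shows "sum (W b) T \<le> quantized_channel W F b z"
proof (cases z)
  case None
  have "t \<notin> F" if "t \<in> T" for t
    using assms(3)[OF that] None by (auto simp: quantize_def split: if_splits)
  hence "T \<inter> F = {}"
    by blast
  hence "sum (W b) T + sum (W b) F \<le> 1"
    using assms(1,2) sum_W_le_1[of "T \<union> F" b] by (simp add: sum.union_disjoint)
  thus ?thesis
    using None by (simp add: quantized_channel_def)
next
  case (Some y)
  have "t = y" if "t \<in> T" for t
    using assms(3)[OF that] Some by (auto simp: quantize_def split: if_splits)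
  hence "T \<subseteq> {y}"
    by blast
  hence "sum (W b) T \<le> sum (W b) {y}"
    using W_nonneg by (intro sum_mono2) auto
  thus ?thesis
    using Some by (simp add: quantized_channel_def)
qed

lemma sum_prod_le_quantized_channel:
  assumes "finite F" "finite S" "finite D"
    and ext: "\<And>y. y \<in> S \<Longrightarrow> y \<in> extensional D"
    and q: "\<And>y i. y \<in> S \<Longrightarrow> i \<in> D \<Longrightarrow> quantize F (y i) = w i"
  shows "(\<Sum>y\<in>S. \<Prod>i\<in>D. W (x i) (y i)) \<le> (\<Prod>i\<in>D. quantized_channel W F (x i) (w i))"
proof -
  define T where "T i = (\<lambda>y. y i) ` S" for i
  have "(\<Sum>y\<in>S. \<Prod>i\<in>D. W (x i) (y i)) \<le> (\<Sum>y\<in>PiE D T. \<Prod>i\<in>D. W (x i) (y i))"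
    using assms(2,3) ext W_nonneg
    by (intro sum_mono2 prod_nonneg finite_PiE) (auto simp: T_def PiE_def)
  also have "\<dots> = (\<Prod>i\<in>D. sum (W (x i)) (T i))"
    using assms(2,3) by (intro prod_sum_PiE[symmetric]) (auto simp: T_def)
  also have "\<dots> \<le> (\<Prod>i\<in>D. quantized_channel W F (x i) (w i))"
    using assms(1,2) q W_nonneg
    by (intro prod_mono conjI sum_nonneg sum_le_quantized_channel) (auto simp: T_def)
  finally show ?thesis .
qed

lemma sum_joint_ext_le_quantized:
  assumes "finite F" "finite S" "S \<subseteq> ext_outputs n j"
    and q: "\<And>y i. y \<in> S \<Longrightarrow> i \<in> {..<n}-{j} \<Longrightarrow> quantize F (y i) = w i"
  shows "sum (joint_ext n C W j b) S \<le> joint_ext n C (quantized_channel W F) j b w"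
proof -
  have "sum (joint_ext n C W j b) S
      = (\<Sum>x\<in>{x\<in>C. x j = b}. \<Sum>y\<in>S. \<Prod>k\<in>{..<n}-{j}. W (x k) (y k)) / card C"
    unfolding joint_ext_def by (simp add: sum_divide_distrib[symmetric] sum.swap[of _ S])
  also have "\<dots> \<le> (\<Sum>x\<in>{x\<in>C. x j = b}. \<Prod>k\<in>{..<n}-{j}. quantized_channel W F (x k) (w k)) / card C"
    using assms(1,2,3) q
    by (intro divide_right_mono sum_mono sum_prod_le_quantized_channel)
      (auto simp: ext_outputs_def extensional_def)
  also have "\<dots> = joint_ext n C (quantized_channel W F) j b w"
    unfolding joint_ext_def ..
  finally show ?thesis .
qed

lemma sum_min_joint_ext_le_quantized:
  assumes F: "finite F" and S: "finite S" "S \<subseteq> ext_outputs n j"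
  shows "(\<Sum>y\<in>S. min (joint_ext n C W j False y) (joint_ext n C W j True y))
    \<le> (\<Sum>w\<in>PiE ({..<n}-{j}) (\<lambda>_. quantized_outputs F).
      min (joint_ext n C (quantized_channel W F) j False w) (joint_ext n C (quantized_channel W F) j True w))"
    (is "sum ?f S \<le> (\<Sum>w\<in>?P. ?Q w)")
proof -
  define qy where "qy y = restrict (\<lambda>i. quantize F (y i)) ({..<n}-{j})" for y :: "nat \<Rightarrow> 'y"
  interpret Q: finite_channel "quantized_channel W F" "quantized_outputs F"
    by (rule finite_channel_quantized[OF F])
  have "sum ?f S = (\<Sum>w\<in>qy ` S. sum ?f {y\<in>S. qy y = w})"
    using S(1) by (rule sum.image_gen)
  also have "\<dots> \<le> (\<Sum>w\<in>qy ` S. ?Q w)"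
  proof (intro sum_mono)
    fix w
    have "sum (joint_ext n C W j b) {y\<in>S. qy y = w} \<le> joint_ext n C (quantized_channel W F) j b w" for b
      using F S by (intro sum_joint_ext_le_quantized) (auto simp: qy_def)
    moreover have "sum ?f {y\<in>S. qy y = w} \<le> sum (joint_ext n C W j b) {y\<in>S. qy y = w}" for b
      by (cases b) (auto intro: sum_mono)
    ultimately show "sum ?f {y\<in>S. qy y = w} \<le> ?Q w"
      by (meson min.bounded_iff order_trans)
  qed
  also have "\<dots> \<le> (\<Sum>w\<in>?P. ?Q w)"
  proof (intro sum_mono2)
    show "finite ?P"
      using Q.finite_Z by (intro finite_PiE) auto
    show "qy ` S \<subseteq> ?P"
      unfolding qy_def by (intro image_subsetI) (simp add: restrict_PiE_iff quantize_def quantized_outputs_def)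
    show "0 \<le> ?Q w" for w
      unfolding joint_ext_def using Q.V_nonneg by (simp add: divide_nonneg_nonneg sum_nonneg prod_nonneg)
  qed
  finally show ?thesis .
qed

lemma Pe_le_quantized:
  assumes "finite F"
  shows "Pe n C W j \<le> (\<Sum>w\<in>PiE ({..<n}-{j}) (\<lambda>_. quantized_outputs F).
    min (joint_ext n C (quantized_channel W F) j False w) (joint_ext n C (quantized_channel W F) j True w))"
proof (cases "(\<lambda>y. min (joint_ext n C W j False y) (joint_ext n C W j True y)) summable_on ext_outputs n j")
  case True
  thus ?thesis
    unfolding Pe_def using sum_min_joint_ext_le_quantized[OF assms] by (intro infsum_le_finite_sums) auto
next
  case False
  thus ?thesis
    unfolding Pe_def using sum_min_joint_ext_le_quantized[OF assms, of "{}"] by (simp add: infsum_not_exists)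
qed

lemma sum_capacity_density_le_quantized:
  assumes "finite F"
  shows "(1/2) * sum (capacity_density W) F
    \<le> finite_channel.finite_capacity (quantized_channel W F) (quantized_outputs F)"
proof -
  interpret Q: finite_channel "quantized_channel W F" "quantized_outputs F"
    by (rule finite_channel_quantized[OF assms])
  have "sum (capacity_density W) F = (\<Sum>z\<in>Some ` F. capacity_density (quantized_channel W F) z)"
    by (simp add: sum.reindex capacity_density_def quantized_channel_def)
  also have "\<dots> \<le> (\<Sum>z\<in>quantized_outputs F. capacity_density (quantized_channel W F) z)"
    using Q.finite_Z Q.V_nonneg
    by (intro sum_mono2 capacity_density_nonneg) (auto simp: quantized_outputs_def)
  finally show ?thesis
    unfolding Q.finite_capacity_def by simp
qed

lemma capacity_approx_quantized:
  assumes "\<delta> > 0"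
  obtains F where "finite F"
    "capacity W - \<delta> < finite_channel.finite_capacity (quantized_channel W F) (quantized_outputs F)"
proof -
  have "\<exists>F. finite F \<and> infsum (capacity_density W) UNIV - 2 * \<delta> < sum (capacity_density W) F"
  proof (cases "capacity_density W summable_on UNIV")
    case True
    then obtain F where "finite F" "dist (sum (capacity_density W) F) (infsum (capacity_density W) UNIV) \<le> \<delta>"
      using has_sum_finite_approximation[OF has_sum_infsum assms] by blast
    thus ?thesis
      using assms by (auto simp: dist_real_def abs_le_iff)
  next
    case False
    thus ?thesis
      using assms by (intro exI[of _ "{}"]) (simp add: infsum_not_exists)
  qed
  then obtain F where "finite F" "infsum (capacity_density W) UNIV - 2 * \<delta> < sum (capacity_density W) F"
    by blast
  thus ?thesis
    using that sum_capacity_density_le_quantized[of F] by (simp add: capacity_eq_infsum)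
qed


lemma code_rate_ge_quantized:
  assumes F: "finite F" and n: "n > 0" and code: "binary_code n C"
    and balanced: "\<And>j. j < n \<Longrightarrow> 2 * card {x\<in>C. x j} = card C"
    and Pe: "\<And>j. j < n \<Longrightarrow> p \<le> Pe n C W j"
  shows "finite_channel.finite_capacity (quantized_channel W F) (quantized_outputs F)
      - finite_channel.entropy_gap (quantized_channel W F) (quantized_outputs F) * (1 - 2 * p)
    \<le> code_rate n C"
proof -
  interpret Q: balanced_code_channel "quantized_channel W F" "quantized_outputs F" n C
    using finite_channel_quantized[OF F] finite_binary_code[OF code] code balanced
    by (simp add: balanced_code_channel_def balanced_code_channel_axioms_def binary_code_def)
  have "p \<le> Q.bit_error j" if "j < n" for j
    using Pe[OF that] Pe_le_quantized[OF F, of n C j]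
    unfolding Q.bit_error_def Q.outputs_except_def by linarith
  hence "n * (Q.finite_capacity - Q.entropy_gap * (1 - 2 * p)) \<le> log 2 (card C)"
    by (rule Q.log_card_ge)
  thus ?thesis
    using n by (simp add: code_rate_def field_simps)
qed

lemma Pe_bounded_away_from_half:
  assumes "r < capacity W"
  obtains c where "c > 0"
    "\<And>n C p. n > 0 \<Longrightarrow> binary_code n C \<Longrightarrow> (\<And>j. j < n \<Longrightarrow> 2 * card {x\<in>C. x j} = card C)
      \<Longrightarrow> (\<And>j. j < n \<Longrightarrow> p \<le> Pe n C W j) \<Longrightarrow> code_rate n C < r \<Longrightarrow> p < 1/2 - c"
proof -
  define \<delta> where "\<delta> = (capacity W - r) / 2"
  have \<delta>: "\<delta> > 0" "r = capacity W - 2 * \<delta>"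
    using assms by (simp_all add: \<delta>_def field_simps)
  obtain F where F: "finite F"
    "capacity W - \<delta> < finite_channel.finite_capacity (quantized_channel W F) (quantized_outputs F)"
    using \<delta>(1) by (rule capacity_approx_quantized)
  interpret Q: finite_channel "quantized_channel W F" "quantized_outputs F"
    by (rule finite_channel_quantized[OF F(1)])
  define \<epsilon> where "\<epsilon> = \<delta> / (2 * (Q.entropy_gap + 1))"
  have \<epsilon>: "\<epsilon> > 0" "Q.entropy_gap * (2 * \<epsilon>) < \<delta>"
    using \<delta>(1) Q.entropy_gap_nonneg by (auto simp: \<epsilon>_def field_simps)
  show ?thesis
  proof (rule that[OF \<epsilon>(1)])
    fix n C p
    assume code: "n > 0" "binary_code n C" "\<And>j. j < n \<Longrightarrow> 2 * card {x\<in>C. x j} = card C"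
      and Pe: "\<And>j. j < n \<Longrightarrow> p \<le> Pe n C W j" and rate: "code_rate n C < r"
    show "p < 1/2 - \<epsilon>"
    proof (rule ccontr)
      assume "\<not> p < 1/2 - \<epsilon>"
      hence "Q.entropy_gap * (1 - 2 * p) \<le> Q.entropy_gap * (2 * \<epsilon>)"
        using Q.entropy_gap_nonneg by (intro mult_left_mono) auto
      moreover have "Q.finite_capacity - Q.entropy_gap * (1 - 2 * p) \<le> code_rate n C"
        using F(1) code Pe by (rule code_rate_ge_quantized)
      ultimately show False
        using F(2) \<epsilon>(2) \<delta>(2) rate by linarith
    qed
  qed
qed

end

theorem lemma2:
  fixes W :: "bool \<Rightarrow> 'y::countable \<Rightarrow> real"
    and n :: "nat \<Rightarrow> nat"
    and C :: "nat \<Rightarrow> (nat \<Rightarrow> bool) set"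
    and pe :: "nat \<Rightarrow> real"
  assumes "bms_channel W"
    and "\<And>i. n i > 0"
    and "\<And>i. binary_code (n i) (C i)"
    and "limsup (\<lambda>i. ereal (code_rate (n i) (C i))) < ereal (capacity W)"
    and "\<And>i j. j < n i \<Longrightarrow> 2 * card {x\<in>C i. x j} = card (C i)"
    and "\<And>i j. j < n i \<Longrightarrow> Pe (n i) (C i) W j = pe i"
  shows "\<exists>c>0. \<forall>\<^sub>F i in sequentially. pe i < 1/2 - c"
proof -
  interpret binary_input_channel W
    using assms(1) unfolding bms_channel_def by unfold_locales auto
  obtain r where r: "limsup (\<lambda>i. ereal (code_rate (n i) (C i))) < ereal r" "r < capacity W"
    using ereal_dense2[OF assms(4)] by auto
  obtain c where "c > 0" and c: "\<And>n C p. n > 0 \<Longrightarrow> binary_code n C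
      \<Longrightarrow> (\<And>j. j < n \<Longrightarrow> 2 * card {x\<in>C. x j} = card C)
      \<Longrightarrow> (\<And>j. j < n \<Longrightarrow> p \<le> Pe n C W j) \<Longrightarrow> code_rate n C < r \<Longrightarrow> p < 1/2 - c"
    using Pe_bounded_away_from_half[OF r(2)] by blast
  have "\<forall>\<^sub>F i in sequentially. code_rate (n i) (C i) < r"
    using Limsup_lessD[OF r(1)] by simp
  hence "\<forall>\<^sub>F i in sequentially. pe i < 1/2 - c"
  proof (rule eventually_mono)
    fix i assume "code_rate (n i) (C i) < r"
    thus "pe i < 1/2 - c"
      using assms(2,3,5,6) by (intro c[of "n i" "C i"]) auto
  qed
  thus ?thesis
    using \<open>c > 0\<close> by blast
qed

end
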